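(* Let $P,Q$ be probability measures on $(\Omega,\mathcal{M})$, $g$ a bounded measurable real function on $\Omega$, and $\gamma\in\mathbb{R}\setminus\{0\}$. Define $$\Xi_+^\gamma(Q\|P,g)=\inf_{\beta>\gamma,\beta\ne0}\Big\{\frac1\beta\log\int e^{\beta g}dP-\frac1\gamma\log\int e^{\gamma g}dP+\frac{1}{\beta-\gamma}R_{\beta/(\beta-\gamma)}(Q\|P)\Big\},$$ $$\Xi_-^\gamma(Q\|P,g)=\sup_{\beta<\gamma,\beta\ne0}\Big\{\frac1\beta\log\int e^{\beta g}dP-\frac1\gamma\log\int e^{\gamma g}dP-\frac{1}{\gamma-\beta}R_{\gamma/(\gamma-\beta)}(P\|Q)\Big\}.$$ Then $$\Xi_-^\gamma(Q\|P,g)\le\frac1\gamma\log\int e^{\gamma g}dQ-\frac1\gamma\log\int e^{\gamma g}dP\le\Xi_+^\gamma(Q\|P,g).$$ Moreover: (1) $\Xi_-^\gamma(Q\|P,g)=-\Xi_+^{-\gamma}(Q\|P,-g)$; (2) $\pm\Xi_\pm^\gamma(Q\|P,g)\ge0$, and if $g$ is not $P$-a.s. constant then $\Xi_+^\gamma(Q\|P,g)=0$ iff $Q=P$, and $\Xi_-^\gamma(Q\|P,g)=0$ iff $Q=P$.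
   Context: Rényi divergence: let $\nu$ be a $\sigma$-finite positive measure with $dP=p\,d\nu$, $dQ=q\,d\nu$. For $\alpha\in(0,1)$, $R_\alpha(Q\|P)=\frac{1}{\alpha(\alpha-1)}\log\int_{p>0}q^\alpha p^{1-\alpha}\,d\nu$; for $\alpha>1$, the same formula if $Q\ll P$ and $R_\alpha(Q\|P)=+\infty$ if $Q\not\ll P$; for $\alpha<0$, $R_\alpha(Q\|P)=R_{1-\alpha}(P\|Q)$. *)

theory Defs
  imports "HOL-Probability.Probability"
begin

text \<open>Extended-real value of \<open>(1/(\<alpha>(\<alpha>-1))) * log I\<close> for \<open>I \<in> [0,\<infinity>]\<close>,
  with \<open>log 0 = -\<infinity>\<close> and \<open>log \<infinity> = \<infinity>\<close>.\<close>
definition renyi_val :: "real \<Rightarrow> ennreal \<Rightarrow> ereal" where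
  "renyi_val \<alpha> I =
     (if I = 0 then (if \<alpha> * (\<alpha> - 1) < 0 then \<infinity> else - \<infinity>)
      else if I = \<top> then (if \<alpha> * (\<alpha> - 1) > 0 then \<infinity> else - \<infinity>)
      else ereal (ln (enn2real I) / (\<alpha> * (\<alpha> - 1))))"

text \<open>Renyi divergence \<open>R_\<alpha>(Q||P)\<close> for \<open>\<alpha> > 0\<close>, \<open>\<alpha> \<noteq> 1\<close>, computed with
  respect to some sigma-finite dominating measure \<open>\<nu>\<close> with densities \<open>p, q\<close>
  (the value does not depend on the choice).\<close>
definition renyi_pos :: "real \<Rightarrow> 'a measure \<Rightarrow> 'a measure \<Rightarrow> ereal" where
  "renyi_pos \<alpha> Q P =
     (SOME r. \<exists>\<nu> p q. sigma_finite_measure \<nu> \<and> sets \<nu> = sets P \<and>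
        p \<in> borel_measurable \<nu> \<and> q \<in> borel_measurable \<nu> \<and>
        (\<forall>x \<in> space \<nu>. 0 \<le> p x \<and> 0 \<le> q x) \<and>
        P = density \<nu> (\<lambda>x. ennreal (p x)) \<and> Q = density \<nu> (\<lambda>x. ennreal (q x)) \<and>
        r = (if 1 < \<alpha> \<and> \<not> absolutely_continuous P Q then \<infinity>
             else renyi_val \<alpha>
               (\<integral>\<^sup>+ x. ennreal (indicator {y. 0 < p y} x * (q x powr \<alpha>) * (p x powr (1 - \<alpha>))) \<partial>\<nu>)))"

text \<open>Renyi divergence \<open>R_\<alpha>(Q||P)\<close>; for \<open>\<alpha> < 0\<close> it is \<open>R_{1-\<alpha>}(P||Q)\<close>.
  (Only used for \<open>\<alpha> \<notin> {0,1}\<close>.)\<close>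
definition renyi :: "real \<Rightarrow> 'a measure \<Rightarrow> 'a measure \<Rightarrow> ereal" where
  "renyi \<alpha> Q P = (if \<alpha> < 0 then renyi_pos (1 - \<alpha>) P Q else renyi_pos \<alpha> Q P)"

definition cgf_term :: "'a measure \<Rightarrow> ('a \<Rightarrow> real) \<Rightarrow> real \<Rightarrow> real" where
  "cgf_term P g \<beta> = ln (integral\<^sup>L P (\<lambda>x. exp (\<beta> * g x))) / \<beta>"

definition Xi_plus :: "real \<Rightarrow> 'a measure \<Rightarrow> 'a measure \<Rightarrow> ('a \<Rightarrow> real) \<Rightarrow> ereal" where
  "Xi_plus \<gamma> Q P g =
     (INF \<beta> \<in> {\<beta>. \<beta> > \<gamma> \<and> \<beta> \<noteq> 0}.
        ereal (cgf_term P g \<beta> - cgf_term P g \<gamma>)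
        + ereal (1 / (\<beta> - \<gamma>)) * renyi (\<beta> / (\<beta> - \<gamma>)) Q P)"

definition Xi_minus :: "real \<Rightarrow> 'a measure \<Rightarrow> 'a measure \<Rightarrow> ('a \<Rightarrow> real) \<Rightarrow> ereal" where
  "Xi_minus \<gamma> Q P g =
     (SUP \<beta> \<in> {\<beta>. \<beta> < \<gamma> \<and> \<beta> \<noteq> 0}.
        ereal (cgf_term P g \<beta> - cgf_term P g \<gamma>)
        - ereal (1 / (\<gamma> - \<beta>)) * renyi (\<gamma> / (\<gamma> - \<beta>)) P Q)"

end

theory Submission
  imports Defs
begin

text \<open>
  Write a = beta / (beta - gamma) and represent P, Q by densities p, q with respect to a common
  dominating measure. Hoelder's inequality, with exponents 1/a and (a - 1)/a when a > 1 and with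
  exponents a and 1 - a when 0 < a < 1, applied to suitable factorisations of q exp(gamma g) and of
  q^a p^(1 - a), gives the variational inequality
    (1/gamma) log E_Q exp(gamma g) - (1/beta) log E_P exp(beta g) <= R_a(Q||P) / (beta - gamma)
  for all nonzero beta > gamma; the case a < 0 reduces to a > 1 through R_a(Q||P) = R_(1-a)(P||Q).
  Taking the infimum over beta gives the inequality for Xi_plus, and the one for Xi_minus is the same
  statement for (-gamma, -g).  For g = 0 the variational inequality says R_a >= 0, and for Q = P it says
  that beta |-> (1/beta) log E_P exp(beta g) is increasing, so every term of the infimum is
  nonnegative.  If Q = P the Renyi term vanishes and continuity of the cumulant generating function
  at gamma makes the infimum 0.  If Q differs from P, testing the variational inequality with the
  indicator of a set A with P(A) < Q(A) keeps the Renyi term away from 0 for beta near gamma, and for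
  the other beta the cgf term stays away from 0 by strict Jensen, as g is not P-a.s. constant.
\<close>

lemma powr_minus_one_sign:
  fixes z e :: real
  assumes "0 < z" "z \<noteq> 1" "e \<noteq> 0"
  shows "0 < e * (z powr e - 1) * (z - 1)"
proof -
  consider "1 < z" "0 < e" | "1 < z" "e < 0" | "z < 1" "0 < e" | "z < 1" "e < 0"
    using assms by linarith
  then show ?thesis
  proof cases
    case 1 then show ?thesis by simp
  next
    case 2
    then have "z powr e < 1" using powr_less_mono2_neg[of e 1 z] by simp
    then show ?thesis using 2 by (intro mult_pos_pos mult_neg_neg) auto
  next
    case 3
    then have "z powr e < 1" using assms by (simp add: powr01_less_one)
    then show ?thesis using 3 by (intro mult_neg_neg mult_pos_neg) auto
  next
    case 4
    then have "1 < z powr e" using powr_less_mono2_neg[of e z 1] assms by simp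
    then show ?thesis using 4 by (intro mult_neg_neg mult_neg_pos) auto
  qed
qed

lemma powr_tangent_strict:
  fixes t r :: real
  assumes t: "0 < t" "t \<noteq> 1" and r: "r \<noteq> 0" "r \<noteq> 1"
  shows "0 < r * (r - 1) * (t powr r - 1 - r * (t - 1))"
proof -
  define f where "f s = s powr r - r * s" for s :: real
  define f' where "f' s = r * (s powr (r - 1) - 1)" for s :: real
  have der: "(f has_real_derivative f' s) (at s)" if "0 < s" for s
    unfolding f_def f'_def using that
    by (auto intro!: derivative_eq_intros simp: algebra_simps)
  obtain z where z: "0 < z" "z \<noteq> 1" "0 < (z - 1) * (t - 1)" "f t - f 1 = (t - 1) * f' z"
  proof (cases "1 < t")
    case True
    then obtain z where "1 < z" "z < t" "f t - f 1 = (t - 1) * f' z"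
      using MVT2[of 1 t f f'] der by force
    then show thesis using True that[of z] by auto
  next
    case False
    then obtain z where z: "t < z" "z < 1" "f 1 - f t = (1 - t) * f' z"
      using MVT2[of t 1 f f'] der t by force
    moreover have "0 < (z - 1) * (t - 1)" using z False by (intro mult_neg_neg) auto
    ultimately show thesis using t by (intro that[of z]) (auto simp: algebra_simps)
  qed
  have "0 < (r - 1) * (z powr (r - 1) - 1) * (z - 1)"
    using powr_minus_one_sign[of z "r - 1"] z r by auto
  moreover have "0 < r * r"
    using r by (auto simp: zero_less_mult_iff linorder_neq_iff)
  ultimately have "0 < r * r * ((r - 1) * (z powr (r - 1) - 1) * (z - 1) * ((z - 1) * (t - 1)))"
    using z(3) mult_pos_pos by metis
  also have "\<dots> = r * (r - 1) * (f t - f 1) * (z - 1)\<^sup>2"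
    unfolding z(4) f'_def by (simp add: algebra_simps power2_eq_square)
  finally have "0 < r * (r - 1) * (f t - f 1) * (z - 1)\<^sup>2" .
  then have "0 < r * (r - 1) * (f t - f 1)"
    using z(2) by (simp add: zero_less_mult_iff)
  then show ?thesis by (simp add: f_def algebra_simps)
qed

lemma Youngs_inequality_normalised:
  fixes c d x y U V :: real
  assumes cd: "0 < c" "0 < d" "c + d = 1" and xy: "0 \<le> x" "0 \<le> y" and UV: "0 < U" "0 < V"
  shows "x powr c * y powr d
    \<le> U powr c * V powr d * (c / U) * x + U powr c * V powr d * (d / V) * y"
proof (cases "x = 0 \<or> y = 0")
  case True
  then show ?thesis using xy cd UV by auto
next
  case False
  then have "(x / U) powr c * (y / V) powr d \<le> c * (x / U) + d * (y / V)"
    using Youngs_inequality_0[of c d "x / U" "y / V"] cd UV xy by auto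
  then show ?thesis
    using UV xy by (simp add: powr_divide field_simps)
qed

lemma ln_div_less_of_powr_gap:
  fixes m E \<gamma> \<beta> :: real
  assumes m: "0 < m" and E: "0 < E" and \<gamma>: "\<gamma> \<noteq> 0" and \<beta>: "\<beta> \<noteq> 0" "\<gamma> < \<beta>"
    and gap: "0 < \<beta> / \<gamma> * (\<beta> / \<gamma> - 1) * (E / m powr (\<beta> / \<gamma>) - 1)"
  shows "ln m / \<gamma> < ln E / \<beta>"
proof -
  define r where "r = \<beta> / \<gamma>"
  have pos: "0 < r * (r - 1) * (E / m powr r - 1)"
    using gap by (simp add: r_def)
  have "r * (r - 1) = \<beta> * (\<beta> - \<gamma>) / \<gamma>\<^sup>2"
    unfolding r_def using \<gamma> by (simp add: field_simps power2_eq_square)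
  then have r_sign: "0 < r * (r - 1) \<longleftrightarrow> 0 < \<beta>" "r * (r - 1) < 0 \<longleftrightarrow> \<beta> < 0"
    using \<beta> \<gamma> by (simp_all add: zero_less_divide_iff divide_less_0_iff zero_less_mult_iff mult_less_0_iff)
  have mr: "0 < m powr r" using m by simp
  have ln_mr: "ln (m powr r) = \<beta> * (ln m / \<gamma>)"
    using m by (simp add: ln_powr r_def)
  have "0 < \<beta> * (ln E - ln (m powr r))"
  proof (cases "0 < \<beta>")
    case True
    then have "0 < E / m powr r - 1" using pos r_sign by (simp add: zero_less_mult_iff)
    then have "m powr r < E" using mr by (simp add: less_divide_eq)
    then have "ln (m powr r) < ln E" using mr E by (intro ln_less_cancel_iff[THEN iffD2])
    then show ?thesis using True by simp
  next
    case False
    then have "r * (r - 1) < 0" using r_sign(2) \<beta> by simp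
    then have "E / m powr r - 1 < 0"
      using pos mult_nonpos_nonneg[of "r * (r - 1)" "E / m powr r - 1"] by linarith
    then have "E < m powr r" using mr by (simp add: divide_less_eq)
    then have "ln E < ln (m powr r)" using mr E by (intro ln_less_cancel_iff[THEN iffD2])
    then show ?thesis using False \<beta> by (simp add: mult_neg_neg)
  qed
  also have "\<beta> * (ln E - ln (m powr r)) = \<beta>\<^sup>2 * (ln E / \<beta> - ln m / \<gamma>)"
    unfolding ln_mr using \<beta> by (simp add: field_simps power2_eq_square)
  finally have "0 < ln E / \<beta> - ln m / \<gamma>"
    by (simp add: zero_less_mult_iff)
  then show ?thesis by simp
qed

lemma ln_affine_exp_div_strict_mono:
  fixes \<gamma> x y :: real
  assumes \<gamma>: "\<gamma> \<noteq> 0" and xy: "0 \<le> x" "x < y" "y \<le> 1"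
  shows "ln (1 + (exp \<gamma> - 1) * x) / \<gamma> < ln (1 + (exp \<gamma> - 1) * y) / \<gamma>"
proof (cases "0 < \<gamma>")
  case True
  then have "0 < exp \<gamma> - 1" by simp
  then have "1 + (exp \<gamma> - 1) * x < 1 + (exp \<gamma> - 1) * y" "0 < 1 + (exp \<gamma> - 1) * x"
    using xy by (simp_all add: add_pos_nonneg)
  then have "ln (1 + (exp \<gamma> - 1) * x) < ln (1 + (exp \<gamma> - 1) * y)"
    by (intro ln_less_cancel_iff[THEN iffD2]) auto
  then show ?thesis using True by (simp add: divide_strict_right_mono)
next
  case False
  then have neg: "exp \<gamma> - 1 < 0" using \<gamma> by simp
  then have "1 + (exp \<gamma> - 1) * y < 1 + (exp \<gamma> - 1) * x" using xy by simp
  moreover have "0 < 1 + (exp \<gamma> - 1) * y"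
  proof -
    have "exp \<gamma> - 1 \<le> (exp \<gamma> - 1) * y" using neg xy by (simp add: mult_le_cancel_left1)
    then show ?thesis by (smt (verit) exp_gt_zero)
  qed
  ultimately have "ln (1 + (exp \<gamma> - 1) * y) < ln (1 + (exp \<gamma> - 1) * x)" by simp
  then show ?thesis using False \<gamma> by (simp add: divide_strict_right_mono_neg)
qed

lemma ereal_le_mult_rescale:
  assumes "0 < k" "ereal x \<le> ereal c * R"
  shows "ereal (x / k) \<le> ereal (c / k) * R"
  using assms
  by (cases R) (auto simp: divide_right_mono divide_nonpos_pos zero_less_divide_iff divide_less_0_iff
      split: if_splits)

lemma ereal_mult_le_rescale_neg:
  assumes "0 < k" "ereal c * R \<le> ereal y"
  shows "ereal (- y / k) \<le> ereal (- c / k) * R"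
  using assms
  by (cases R) (auto simp: divide_right_mono divide_nonpos_pos zero_less_divide_iff divide_less_0_iff
      split: if_splits)

section \<open>Exponential moments of bounded functions\<close>

lemma integrable_exp_mult:
  fixes M :: "'a measure" and g :: "'a \<Rightarrow> real"
  assumes "finite_measure M" "g \<in> borel_measurable M" "\<forall>x \<in> space M. \<bar>g x\<bar> \<le> B"
  shows "integrable M (\<lambda>x. exp (c * g x))"
proof (rule finite_measure.integrable_const_bound[OF assms(1), where B="exp (\<bar>c\<bar> * B)"])
  have "c * g x \<le> \<bar>c\<bar> * B" if "x \<in> space M" for x
    using assms(3) that abs_mult[of c "g x"] mult_left_mono[of "\<bar>g x\<bar>" B "\<bar>c\<bar>"]
    by (smt (verit) abs_ge_self abs_ge_zero)
  then show "AE x in M. norm (exp (c * g x)) \<le> exp (\<bar>c\<bar> * B)"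
    by (intro AE_I2) auto
qed (use assms(2) in measurable)

lemma integral_exp_mult_pos:
  fixes M :: "'a measure" and g :: "'a \<Rightarrow> real"
  assumes M: "prob_space M" and g: "g \<in> borel_measurable M" "\<forall>x \<in> space M. \<bar>g x\<bar> \<le> B"
  shows "0 < (\<integral>x. exp (c * g x) \<partial>M)"
proof -
  interpret prob_space M by fact
  have "- (\<bar>c\<bar> * B) \<le> c * g x" if "x \<in> space M" for x
    using g(2) that abs_mult[of c "g x"] mult_left_mono[of "\<bar>g x\<bar>" B "\<bar>c\<bar>"]
    by (smt (verit) abs_ge_self abs_ge_zero)
  then have "(\<integral>x. exp (- (\<bar>c\<bar> * B)) \<partial>M) \<le> (\<integral>x. exp (c * g x) \<partial>M)"
    using integrable_exp_mult[OF finite_measure_axioms g] by (intro integral_mono) auto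
  moreover have "0 < (\<integral>x. exp (- (\<bar>c\<bar> * B)) \<partial>M)" by (simp add: prob_space)
  ultimately show ?thesis by linarith
qed

lemma bounded_measurable_cong_sets:
  fixes g :: "'a \<Rightarrow> real"
  assumes sets_eq: "sets Q = sets P" and "g \<in> borel_measurable P" "\<forall>x \<in> space P. \<bar>g x\<bar> \<le> B"
  shows "g \<in> borel_measurable Q" "\<forall>x \<in> space Q. \<bar>g x\<bar> \<le> B"
  using assms measurable_cong_sets[OF sets_eq refl] sets_eq_imp_space_eq[OF sets_eq] by auto

lemma convex_on_integral_exp_mult:
  fixes M :: "'a measure" and g :: "'a \<Rightarrow> real"
  assumes "finite_measure M" "g \<in> borel_measurable M" "\<forall>x \<in> space M. \<bar>g x\<bar> \<le> B"
  shows "convex_on UNIV (\<lambda>c. \<integral>x. exp (c * g x) \<partial>M)"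
proof (rule convex_onI)
  fix t a b :: real assume t: "0 < t" "t < 1"
  have int: "integrable M (\<lambda>x. exp (c * g x))" for c
    using integrable_exp_mult[OF assms] .
  have "exp (((1 - t) *\<^sub>R a + t *\<^sub>R b) * g x) \<le> (1 - t) * exp (a * g x) + t * exp (b * g x)" for x
    using convex_onD[OF exp_convex, of t "a * g x" "b * g x"] t by (simp add: algebra_simps)
  then have "(\<integral>x. exp (((1 - t) *\<^sub>R a + t *\<^sub>R b) * g x) \<partial>M)
      \<le> (\<integral>x. (1 - t) * exp (a * g x) + t * exp (b * g x) \<partial>M)"
    using int[of "(1 - t) *\<^sub>R a + t *\<^sub>R b"] int[of a] int[of b] by (intro integral_mono) auto
  also have "\<dots> = (1 - t) * (\<integral>x. exp (a * g x) \<partial>M) + t * (\<integral>x. exp (b * g x) \<partial>M)"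
    using int by simp
  finally show "(\<integral>x. exp (((1 - t) *\<^sub>R a + t *\<^sub>R b) * g x) \<partial>M)
      \<le> (1 - t) * (\<integral>x. exp (a * g x) \<partial>M) + t * (\<integral>x. exp (b * g x) \<partial>M)" .
qed simp

lemma isCont_cgf_term:
  fixes M :: "'a measure" and g :: "'a \<Rightarrow> real"
  assumes M: "prob_space M" and g: "g \<in> borel_measurable M" "\<forall>x \<in> space M. \<bar>g x\<bar> \<le> B"
    and "\<gamma> \<noteq> 0"
  shows "isCont (cgf_term M g) \<gamma>"
proof -
  have "continuous_on UNIV (\<lambda>c. \<integral>x. exp (c * g x) \<partial>M)"
    using convex_on_integral_exp_mult[OF prob_space.finite_measure[OF M] g]
    by (intro convex_on_continuous) auto
  then have "isCont (\<lambda>c. \<integral>x. exp (c * g x) \<partial>M) \<gamma>"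
    by (simp add: continuous_on_eq_continuous_at)
  then show ?thesis
    unfolding cgf_term_def[abs_def]
    using integral_exp_mult_pos[OF M g, of \<gamma>] assms(4) by (auto intro!: continuous_intros)
qed

lemma eventually_at_right_nonzero:
  fixes \<gamma> :: real
  assumes "\<gamma> \<noteq> 0"
  shows "\<forall>\<^sub>F \<beta> in at_right \<gamma>. \<gamma> < \<beta> \<and> \<beta> \<noteq> 0"
proof -
  have "\<gamma> < \<gamma> + \<bar>\<gamma>\<bar>" using assms by simp
  then show ?thesis
    by (rule eventually_mono[OF eventually_at_right_real]) auto
qed

lemma tendsto_cgf_term_at_right:
  fixes M :: "'a measure" and g :: "'a \<Rightarrow> real"
  assumes "prob_space M" "g \<in> borel_measurable M" "\<forall>x \<in> space M. \<bar>g x\<bar> \<le> B" "\<gamma> \<noteq> 0"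
  shows "(cgf_term M g \<longlongrightarrow> cgf_term M g \<gamma>) (at_right \<gamma>)"
  using isCont_cgf_term[OF assms] unfolding isCont_def filterlim_at_split by simp

lemma cgf_term_right_close:
  fixes M :: "'a measure" and g :: "'a \<Rightarrow> real"
  assumes M: "prob_space M" and g: "g \<in> borel_measurable M" "\<forall>x \<in> space M. \<bar>g x\<bar> \<le> B"
    and \<gamma>: "\<gamma> \<noteq> 0" and \<delta>: "0 < \<delta>"
  obtains \<beta> where "\<gamma> < \<beta>" "\<beta> \<noteq> 0" "cgf_term M g \<beta> < cgf_term M g \<gamma> + \<delta>"
proof -
  have "\<forall>\<^sub>F \<beta> in at_right \<gamma>. (\<gamma> < \<beta> \<and> \<beta> \<noteq> 0) \<and> cgf_term M g \<beta> < cgf_term M g \<gamma> + \<delta>"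
    using \<delta> by (intro eventually_conj eventually_at_right_nonzero[OF \<gamma>]
        order_tendstoD(2)[OF tendsto_cgf_term_at_right[OF M g \<gamma>]]) simp
  then obtain \<beta> where "(\<gamma> < \<beta> \<and> \<beta> \<noteq> 0) \<and> cgf_term M g \<beta> < cgf_term M g \<gamma> + \<delta>"
    using eventually_happens'[OF trivial_limit_at_right_real] by blast
  then show thesis using that by blast
qed

lemma Jensen_powr_strict:
  fixes M :: "'a measure" and u :: "'a \<Rightarrow> real" and r :: real
  assumes M: "prob_space M" and u: "u \<in> borel_measurable M" "\<And>x. x \<in> space M \<Longrightarrow> 0 < u x"
    and int: "integrable M u" "integrable M (\<lambda>x. u x powr r)" and mean: "(\<integral>x. u x \<partial>M) = 1"
    and nonconst: "\<not> (AE x in M. u x = 1)" and r: "r \<noteq> 0" "r \<noteq> 1"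
  shows "0 < r * (r - 1) * ((\<integral>x. u x powr r \<partial>M) - 1)"
proof -
  interpret prob_space M by fact
  define \<phi> where "\<phi> x = r * (r - 1) * (u x powr r - 1 - r * (u x - 1))" for x
  have \<phi>_pos: "0 < \<phi> x" if "x \<in> space M" "u x \<noteq> 1" for x
    unfolding \<phi>_def using powr_tangent_strict[OF u(2) _ r] that by auto
  have \<phi>_nonneg: "0 \<le> \<phi> x" if "x \<in> space M" for x
    using \<phi>_pos[OF that] by (cases "u x = 1") (auto simp: \<phi>_def)
  have int_\<phi>: "integrable M \<phi>"
    unfolding \<phi>_def using int by auto
  have "(\<integral>x. \<phi> x \<partial>M) = r * (r - 1) * ((\<integral>x. u x powr r \<partial>M) - 1)"
    unfolding \<phi>_def using int mean by (simp add: prob_space algebra_simps)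
  moreover have "(\<integral>x. \<phi> x \<partial>M) \<noteq> 0"
  proof
    assume "(\<integral>x. \<phi> x \<partial>M) = 0"
    then have "AE x in M. \<phi> x = 0"
      using integral_nonneg_eq_0_iff_AE[OF int_\<phi>] \<phi>_nonneg by simp
    then have "AE x in M. u x = 1"
      using AE_space by eventually_elim (use \<phi>_pos in force)
    with nonconst show False ..
  qed
  moreover have "0 \<le> (\<integral>x. \<phi> x \<partial>M)"
    using \<phi>_nonneg by (simp add: integral_nonneg)
  ultimately show ?thesis by linarith
qed

lemma cgf_term_strict_mono:
  fixes M :: "'a measure" and g :: "'a \<Rightarrow> real"
  assumes M: "prob_space M" and g: "g \<in> borel_measurable M" "\<forall>x \<in> space M. \<bar>g x\<bar> \<le> B"
    and nonconst: "\<not> (\<exists>c. AE x in M. g x = c)"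
    and \<gamma>: "\<gamma> \<noteq> 0" and \<beta>: "\<beta> \<noteq> 0" "\<gamma> < \<beta>"
  shows "cgf_term M g \<gamma> < cgf_term M g \<beta>"
proof -
  interpret prob_space M by fact
  define m where "m = (\<integral>x. exp (\<gamma> * g x) \<partial>M)"
  define E where "E = (\<integral>x. exp (\<beta> * g x) \<partial>M)"
  define r where "r = \<beta> / \<gamma>"
  define u where "u x = exp (\<gamma> * g x) / m" for x
  have m: "0 < m" and E: "0 < E"
    unfolding m_def E_def using integral_exp_mult_pos[OF M g] by auto
  have int: "integrable M (\<lambda>x. exp (c * g x))" for c
    using integrable_exp_mult[OF finite_measure_axioms g] .
  have u_powr: "u x powr r = exp (\<beta> * g x) / m powr r" for x
  proof -
    have "exp (\<gamma> * g x) powr r = exp (\<beta> * g x)"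
      unfolding r_def using \<gamma> by (simp add: powr_def)
    then show ?thesis unfolding u_def using m by (simp add: powr_divide)
  qed
  have "0 < r * (r - 1) * ((\<integral>x. u x powr r \<partial>M) - 1)"
  proof (rule Jensen_powr_strict[OF M])
    show "integrable M (\<lambda>x. u x powr r)"
      unfolding u_powr using int by auto
    show "(\<integral>x. u x \<partial>M) = 1"
      unfolding u_def using m by (simp add: m_def)
    show "\<not> (AE x in M. u x = 1)"
    proof
      assume "AE x in M. u x = 1"
      then have "AE x in M. g x = ln m / \<gamma>"
        by eventually_elim (use m \<gamma> in \<open>auto simp: u_def field_simps\<close>)
      with nonconst show False by blast
    qed
  qed (use m int \<gamma> \<beta> in \<open>auto simp: u_def r_def\<close>)
  also have "(\<integral>x. u x powr r \<partial>M) = E / m powr r"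
    unfolding u_powr E_def by simp
  finally have "0 < r * (r - 1) * (E / m powr r - 1)" .
  then show ?thesis
    using ln_div_less_of_powr_gap[OF m E \<gamma> \<beta>]
    unfolding cgf_term_def m_def[symmetric] E_def[symmetric] r_def by simp
qed

lemma cgf_term_zero:
  assumes "prob_space M"
  shows "cgf_term M (\<lambda>_. 0) c = 0"
  using assms by (simp add: cgf_term_def prob_space.prob_space)

lemma cgf_term_uminus: "cgf_term M (\<lambda>x. - g x) (- c) = - cgf_term M g c"
  by (simp add: cgf_term_def)

lemma cgf_term_indicator:
  fixes M :: "'a measure"
  assumes M: "prob_space M" and A: "A \<in> sets M"
  shows "cgf_term M (indicator A) \<gamma> = ln (1 + (exp \<gamma> - 1) * measure M A) / \<gamma>"
proof -
  interpret prob_space M by fact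
  have "(\<lambda>x. exp (\<gamma> * indicator A x)) = (\<lambda>x. 1 + (exp \<gamma> - 1) * indicator A x :: real)"
    by (auto simp: indicator_def)
  moreover have "(\<integral>x. 1 + (exp \<gamma> - 1) * indicator A x \<partial>M) = 1 + (exp \<gamma> - 1) * measure M A"
    using A by (subst Bochner_Integration.integral_add)
      (auto simp: prob_space emeasure_eq_measure intro!: integrable_real_indicator)
  ultimately show ?thesis
    unfolding cgf_term_def by simp
qed

section \<open>Renyi integrals and Hoelder's inequality\<close>

lemma nn_integral_Holder:
  fixes M :: "'a measure" and u v :: "'a \<Rightarrow> real"
  assumes cd: "0 < c" "0 < d" "c + d = 1"
    and u: "u \<in> borel_measurable M" "\<And>x. x \<in> space M \<Longrightarrow> 0 \<le> u x"
      "(\<integral>\<^sup>+x. u x \<partial>M) = ennreal U" "0 \<le> U"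
    and v: "v \<in> borel_measurable M" "\<And>x. x \<in> space M \<Longrightarrow> 0 \<le> v x"
      "(\<integral>\<^sup>+x. v x \<partial>M) = ennreal V" "0 \<le> V"
  shows "(\<integral>\<^sup>+x. ennreal (u x powr c * v x powr d) \<partial>M) \<le> ennreal (U powr c * V powr d)"
proof (cases "U = 0 \<or> V = 0")
  case True
  have AE_zero: "AE x in M. w x = 0"
    if w: "w \<in> borel_measurable M" "\<And>x. x \<in> space M \<Longrightarrow> 0 \<le> w x" "(\<integral>\<^sup>+x. w x \<partial>M) = 0"
    for w :: "'a \<Rightarrow> real"
  proof -
    have "AE x in M. ennreal (w x) = 0"
      using w(3) by (subst (asm) nn_integral_0_iff_AE) (use w(1) in auto)
    then show ?thesis using AE_space by eventually_elim (use w(2) in auto)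
  qed
  have "AE x in M. u x = 0 \<or> v x = 0"
    using True AE_zero[OF u(1,2)] AE_zero[OF v(1,2)] u(3) v(3) by (auto elim: eventually_mono)
  then have "(\<integral>\<^sup>+x. ennreal (u x powr c * v x powr d) \<partial>M) = 0"
    using u(1) v(1) by (subst nn_integral_0_iff_AE) (auto elim!: eventually_mono)
  then show ?thesis by simp
next
  case False
  then have UV: "0 < U" "0 < V" using u(4) v(4) by auto
  define K where "K = U powr c * V powr d"
  have young: "u x powr c * v x powr d \<le> K * (c / U) * u x + K * (d / V) * v x"
    if "x \<in> space M" for x
    unfolding K_def using Youngs_inequality_normalised[OF cd u(2)[OF that] v(2)[OF that] UV] .
  have "(\<integral>\<^sup>+x. ennreal (u x powr c * v x powr d) \<partial>M)
      \<le> (\<integral>\<^sup>+x. ennreal (K * (c / U)) * u x + ennreal (K * (d / V)) * v x \<partial>M)"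
    using young u(2) v(2) cd UV
    by (intro nn_integral_mono)
       (simp add: K_def ennreal_mult[symmetric] ennreal_plus[symmetric] ennreal_leI del: ennreal_plus)
  also have "\<dots> = ennreal (K * (c / U) * U + K * (d / V) * V)"
    using u v cd UV
    by (simp add: nn_integral_add nn_integral_cmult K_def ennreal_mult[symmetric]
        ennreal_plus[symmetric] del: ennreal_plus)
  also have "K * (c / U) * U + K * (d / V) * V = K"
    using UV cd by (simp add: field_simps flip: distrib_left)
  finally show ?thesis unfolding K_def .
qed

definition density_pair ::
    "'a measure \<Rightarrow> ('a \<Rightarrow> real) \<Rightarrow> ('a \<Rightarrow> real) \<Rightarrow> 'a measure \<Rightarrow> 'a measure \<Rightarrow> bool" where
  "density_pair \<nu> p q P Q \<longleftrightarrow> sigma_finite_measure \<nu> \<and> sets \<nu> = sets P \<and>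
     p \<in> borel_measurable \<nu> \<and> q \<in> borel_measurable \<nu> \<and> (\<forall>x \<in> space \<nu>. 0 \<le> p x \<and> 0 \<le> q x) \<and>
     P = density \<nu> (\<lambda>x. ennreal (p x)) \<and> Q = density \<nu> (\<lambda>x. ennreal (q x))"

definition renyi_integral :: "real \<Rightarrow> 'a measure \<Rightarrow> ('a \<Rightarrow> real) \<Rightarrow> ('a \<Rightarrow> real) \<Rightarrow> ennreal" where
  "renyi_integral \<alpha> \<nu> p q =
     (\<integral>\<^sup>+x. ennreal (indicator {y. 0 < p y} x * (q x powr \<alpha>) * (p x powr (1 - \<alpha>))) \<partial>\<nu>)"

lemma renyi_pos_altdef:
  "renyi_pos \<alpha> Q P =
     (SOME r. \<exists>\<nu> p q. density_pair \<nu> p q P Q \<and>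
        r = (if 1 < \<alpha> \<and> \<not> absolutely_continuous P Q then \<infinity>
             else renyi_val \<alpha> (renyi_integral \<alpha> \<nu> p q)))"
  unfolding renyi_pos_def density_pair_def renyi_integral_def by (simp only: conj_assoc)

lemma density_pairD:
  assumes "density_pair \<nu> p q P Q"
  shows "sigma_finite_measure \<nu>" "sets \<nu> = sets P" "p \<in> borel_measurable \<nu>" "q \<in> borel_measurable \<nu>"
    "\<And>x. x \<in> space \<nu> \<Longrightarrow> 0 \<le> p x" "\<And>x. x \<in> space \<nu> \<Longrightarrow> 0 \<le> q x"
    "P = density \<nu> (\<lambda>x. ennreal (p x))" "Q = density \<nu> (\<lambda>x. ennreal (q x))"
  using assms unfolding density_pair_def by blast+

lemma density_pair_swap: "density_pair \<nu> p q P Q \<longleftrightarrow> density_pair \<nu> q p Q P"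
  unfolding density_pair_def by auto

lemma (in sigma_finite_measure) real_density_exists:
  assumes "finite_measure N" "absolutely_continuous M N" "sets N = sets M"
  obtains D where "D \<in> borel_measurable M" "\<And>x. 0 \<le> D x" "N = density M (\<lambda>x. ennreal (D x))"
proof -
  obtain D where D: "D \<in> borel_measurable M" "AE x in M. RN_deriv M N x = ennreal (D x)" "\<And>x. 0 \<le> D x"
    using real_RN_deriv[OF assms] by metis
  have "N = density M (RN_deriv M N)"
    using density_RN_deriv[OF assms(2,3)] by simp
  also have "\<dots> = density M (\<lambda>x. ennreal (D x))"
    using D by (intro density_cong) auto
  finally show thesis using D that by blast
qed

lemma density_pair_exists:
  assumes P: "finite_measure P" and Q: "finite_measure Q" and sets_eq: "sets Q = sets P"
  obtains \<nu> p q where "density_pair \<nu> p q P Q"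
proof -
  define \<nu> where "\<nu> = sup_measure' P Q"
  have sets_\<nu>: "sets \<nu> = sets P" and space_\<nu>: "space \<nu> = space P"
    unfolding \<nu>_def by (rule sets_sup_measure'[OF sets_eq] space_sup_measure'[OF sets_eq])+
  have "emeasure \<nu> X \<le> emeasure P X + emeasure Q X" if X: "X \<in> sets P" for X
    unfolding \<nu>_def using X sets_eq
    by (subst emeasure_sup_measure'[OF sets_eq X]) (auto intro!: SUP_least add_mono emeasure_mono)
  then have "emeasure \<nu> (space \<nu>) \<le> emeasure P (space P) + emeasure Q (space P)"
    unfolding space_\<nu> by simp
  also have "\<dots> < \<infinity>"
    using finite_measure.emeasure_finite[OF P] finite_measure.emeasure_finite[OF Q]
      sets_eq_imp_space_eq[OF sets_eq]
    by (simp add: less_top)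
  finally interpret \<nu>: finite_measure \<nu> by (intro finite_measureI) simp
  have ac: "absolutely_continuous \<nu> M"
    if "sets M = sets P" "\<And>X. X \<in> sets P \<Longrightarrow> emeasure M X \<le> emeasure \<nu> X" for M
    unfolding absolutely_continuous_def
  proof
    fix X assume "X \<in> null_sets \<nu>"
    then show "X \<in> null_sets M"
      using that sets_\<nu> by (auto simp: null_sets_def) (metis le_zero_eq)
  qed
  have "absolutely_continuous \<nu> P"
    by (rule ac[OF refl]) (unfold \<nu>_def, rule le_emeasure_sup_measure'1[OF sets_eq])
  then obtain p where p: "p \<in> borel_measurable \<nu>" "\<And>x. 0 \<le> p x" "P = density \<nu> (\<lambda>x. ennreal (p x))"
    using \<nu>.real_density_exists[OF P _ sets_\<nu>[symmetric]] by metis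
  have "absolutely_continuous \<nu> Q"
    by (rule ac[OF sets_eq]) (unfold \<nu>_def, rule le_emeasure_sup_measure'2[OF sets_eq])
  moreover have "sets Q = sets \<nu>"
    using sets_eq sets_\<nu> by simp
  ultimately obtain q where q: "q \<in> borel_measurable \<nu>" "\<And>x. 0 \<le> q x" "Q = density \<nu> (\<lambda>x. ennreal (q x))"
    using \<nu>.real_density_exists[OF Q] by metis
  have "density_pair \<nu> p q P Q"
    unfolding density_pair_def using p q sets_\<nu> \<nu>.sigma_finite_measure_axioms by auto
  then show thesis by (rule that)
qed

text \<open>
  The value of renyi_pos is chosen by Hilbert choice through one density pair; everything below works
  with that pair.
\<close>

lemma renyi_pos_density_pair:
  assumes "finite_measure P" "finite_measure Q" "sets Q = sets P"
  obtains \<nu> p q where "density_pair \<nu> p q P Q"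
    and "renyi_pos \<alpha> Q P = (if 1 < \<alpha> \<and> \<not> absolutely_continuous P Q then \<infinity>
                            else renyi_val \<alpha> (renyi_integral \<alpha> \<nu> p q))"
proof -
  obtain \<nu> p q where "density_pair \<nu> p q P Q"
    using density_pair_exists[OF assms] .
  then have "\<exists>r \<nu> p q. density_pair \<nu> p q P Q \<and>
      r = (if 1 < \<alpha> \<and> \<not> absolutely_continuous P Q then \<infinity> else renyi_val \<alpha> (renyi_integral \<alpha> \<nu> p q))"
    by blast
  from someI_ex[OF this[unfolded ex_comm[of "\<lambda>r \<nu>. _"]]] show thesis
    using that unfolding renyi_pos_altdef by blast
qed

lemma AE_density_zero_if_absolutely_continuous:
  fixes \<nu> :: "'a measure" and p q :: "'a \<Rightarrow> real"
  assumes p: "p \<in> borel_measurable \<nu>" and q: "q \<in> borel_measurable \<nu>" "\<And>x. x \<in> space \<nu> \<Longrightarrow> 0 \<le> q x"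
    and ac: "absolutely_continuous (density \<nu> (\<lambda>x. ennreal (p x))) (density \<nu> (\<lambda>x. ennreal (q x)))"
  shows "AE x in \<nu>. p x \<le> 0 \<longrightarrow> q x = 0"
proof -
  define N where "N = {x \<in> space \<nu>. p x \<le> 0}"
  have N: "N \<in> sets \<nu>" unfolding N_def using p by measurable
  have "emeasure (density \<nu> (\<lambda>x. ennreal (p x))) N = (\<integral>\<^sup>+x. ennreal (p x) * indicator N x \<partial>\<nu>)"
    using N p by (simp add: emeasure_density)
  also have "\<dots> = 0"
    by (rule nn_integral_zero'[THEN trans[rotated]], rule AE_I2)
       (auto simp: N_def indicator_def ennreal_neg)
  finally have "N \<in> null_sets (density \<nu> (\<lambda>x. ennreal (p x)))"
    using N by (intro null_setsI) auto
  then have "N \<in> null_sets (density \<nu> (\<lambda>x. ennreal (q x)))"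
    using ac unfolding absolutely_continuous_def by auto
  then have "AE x in \<nu>. ennreal (q x) * indicator N x = 0"
    using N q(1) by (simp add: emeasure_density null_sets_def nn_integral_0_iff_AE)
  then show ?thesis
    using AE_space
  proof eventually_elim
    case (elim x)
    show ?case
    proof
      assume "p x \<le> 0"
      then have "x \<in> N" using elim(2) by (simp add: N_def)
      then have "ennreal (q x) = 0" using elim(1) by simp
      then show "q x = 0" using q(2)[OF elim(2)] by simp
    qed
  qed
qed

lemma nn_integral_density_mult_eq_integral:
  fixes \<nu> M :: "'a measure" and p f :: "'a \<Rightarrow> real"
  assumes p: "p \<in> borel_measurable \<nu>" "\<And>x. x \<in> space \<nu> \<Longrightarrow> 0 \<le> p x"
    and M: "M = density \<nu> (\<lambda>x. ennreal (p x))"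
    and f: "integrable M f" "\<And>x. x \<in> space M \<Longrightarrow> 0 \<le> f x"
  shows "(\<integral>\<^sup>+x. ennreal (p x * f x) \<partial>\<nu>) = ennreal (\<integral>x. f x \<partial>M)"
proof -
  have "f \<in> borel_measurable \<nu>"
    using borel_measurable_integrable[OF f(1)] unfolding M by simp
  then have "(\<integral>\<^sup>+x. ennreal (p x * f x) \<partial>\<nu>) = (\<integral>\<^sup>+x. ennreal (f x) \<partial>M)"
    using p f(2) unfolding M
    by (subst nn_integral_density) (auto intro!: nn_integral_cong simp: ennreal_mult)
  also have "\<dots> = ennreal (\<integral>x. f x \<partial>M)"
    using f by (intro nn_integral_eq_integral) auto
  finally show ?thesis .
qed

lemma powr_Holder_split_gt1:
  fixes a p q y z :: real
  assumes a: "1 < a" and pq: "0 < p" "0 \<le> q" and yz: "(a - 1) * y = a * z"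
  shows "(q powr a * p powr (1 - a)) powr (1 / a) * (p * exp y) powr ((a - 1) / a) = q * exp z"
proof (cases "q = 0")
  case False
  then have "(q powr a * p powr (1 - a)) powr (1 / a) * (p * exp y) powr ((a - 1) / a)
      = exp ((1 / a) * (a * ln q + (1 - a) * ln p) + ((a - 1) / a) * (ln p + y))"
    using pq by (simp add: powr_def ln_mult exp_add[symmetric])
  also have "(1 / a) * (a * ln q + (1 - a) * ln p) + ((a - 1) / a) * (ln p + y) = ln q + z"
    using a yz by (simp add: field_simps)
  finally show ?thesis using pq False by (simp add: exp_add)
qed (use a in simp)

lemma powr_Holder_split_lt1:
  fixes a p q y z :: real
  assumes "0 \<le> p" "0 \<le> q" and yz: "a * z + (1 - a) * y = 0"
  shows "(q * exp z) powr a * (p * exp y) powr (1 - a) = q powr a * p powr (1 - a)"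
proof -
  have "exp z powr a * exp y powr (1 - a) = 1"
    using yz by (simp add: powr_def exp_add[symmetric] algebra_simps)
  then show ?thesis
    using assms by (simp add: powr_mult)
qed

lemma renyi_integral_Holder_gt1:
  fixes \<nu> :: "'a measure" and p q \<phi> \<psi> :: "'a \<Rightarrow> real"
  assumes a: "1 < a" and \<phi>\<psi>: "\<And>x. (a - 1) * \<phi> x = a * \<psi> x"
    and p: "p \<in> borel_measurable \<nu>" "\<And>x. x \<in> space \<nu> \<Longrightarrow> 0 \<le> p x"
    and q: "q \<in> borel_measurable \<nu>" "\<And>x. x \<in> space \<nu> \<Longrightarrow> 0 \<le> q x"
    and \<phi>: "\<phi> \<in> borel_measurable \<nu>"
    and null: "AE x in \<nu>. p x \<le> 0 \<longrightarrow> q x = 0"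
    and I: "renyi_integral a \<nu> p q = ennreal I" "0 \<le> I"
    and F: "(\<integral>\<^sup>+x. ennreal (p x * exp (\<phi> x)) \<partial>\<nu>) = ennreal F" "0 \<le> F"
  shows "(\<integral>\<^sup>+x. ennreal (q x * exp (\<psi> x)) \<partial>\<nu>) \<le> ennreal (I powr (1 / a) * F powr ((a - 1) / a))"
proof -
  have "(\<integral>\<^sup>+x. ennreal (q x * exp (\<psi> x)) \<partial>\<nu>) = (\<integral>\<^sup>+x. ennreal ((indicator {y. 0 < p y} x
      * q x powr a * p x powr (1 - a)) powr (1 / a) * (p x * exp (\<phi> x)) powr ((a - 1) / a)) \<partial>\<nu>)"
  proof (rule nn_integral_cong_AE)
    show "AE x in \<nu>. ennreal (q x * exp (\<psi> x)) = ennreal ((indicator {y. 0 < p y} x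
        * q x powr a * p x powr (1 - a)) powr (1 / a) * (p x * exp (\<phi> x)) powr ((a - 1) / a))"
      using null AE_space
    proof eventually_elim
      case (elim x)
      show ?case
      proof (cases "0 < p x")
        case True
        then show ?thesis
          using powr_Holder_split_gt1[OF a True q(2)[OF elim(2)] \<phi>\<psi>] by (simp add: indicator_def)
      next
        case False
        then show ?thesis using elim p(2)[OF elim(2)] by simp
      qed
    qed
  qed
  also have "\<dots> \<le> ennreal (I powr (1 / a) * F powr ((a - 1) / a))"
  proof (rule nn_integral_Holder)
    show "0 < 1 / a" "0 < (a - 1) / a" "1 / a + (a - 1) / a = 1"
      using a by (auto simp: field_simps)
    show "(\<integral>\<^sup>+x. ennreal (indicator {y. 0 < p y} x * q x powr a * p x powr (1 - a)) \<partial>\<nu>) = ennreal I"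
      using I by (simp add: renyi_integral_def)
  qed (use p q \<phi> F I in auto)
  finally show ?thesis .
qed

lemma renyi_integral_Holder_lt1:
  fixes \<nu> :: "'a measure" and p q \<phi> \<psi> :: "'a \<Rightarrow> real"
  assumes a: "0 < a" "a < 1" and \<phi>\<psi>: "\<And>x. a * \<psi> x + (1 - a) * \<phi> x = 0"
    and p: "p \<in> borel_measurable \<nu>" "\<And>x. x \<in> space \<nu> \<Longrightarrow> 0 \<le> p x"
    and q: "q \<in> borel_measurable \<nu>" "\<And>x. x \<in> space \<nu> \<Longrightarrow> 0 \<le> q x"
    and \<phi>: "\<phi> \<in> borel_measurable \<nu>" and \<psi>: "\<psi> \<in> borel_measurable \<nu>"
    and G: "(\<integral>\<^sup>+x. ennreal (q x * exp (\<psi> x)) \<partial>\<nu>) = ennreal G" "0 \<le> G"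
    and F: "(\<integral>\<^sup>+x. ennreal (p x * exp (\<phi> x)) \<partial>\<nu>) = ennreal F" "0 \<le> F"
  shows "renyi_integral a \<nu> p q \<le> ennreal (G powr a * F powr (1 - a))"
proof -
  have "renyi_integral a \<nu> p q
      \<le> (\<integral>\<^sup>+x. ennreal ((q x * exp (\<psi> x)) powr a * (p x * exp (\<phi> x)) powr (1 - a)) \<partial>\<nu>)"
    unfolding renyi_integral_def
  proof (rule nn_integral_mono)
    fix x assume x: "x \<in> space \<nu>"
    have "(q x * exp (\<psi> x)) powr a * (p x * exp (\<phi> x)) powr (1 - a) = q x powr a * p x powr (1 - a)"
      using powr_Holder_split_lt1[OF p(2)[OF x] q(2)[OF x] \<phi>\<psi>] .
    then show "ennreal (indicator {y. 0 < p y} x * q x powr a * p x powr (1 - a))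
        \<le> ennreal ((q x * exp (\<psi> x)) powr a * (p x * exp (\<phi> x)) powr (1 - a))"
      by (auto simp: indicator_def intro!: ennreal_leI)
  qed
  also have "\<dots> \<le> ennreal (G powr a * F powr (1 - a))"
    by (rule nn_integral_Holder) (use a p q \<phi> \<psi> G F in auto)
  finally show ?thesis .
qed

lemma renyi_pos_density_pair_exp:
  fixes P Q :: "'a measure" and g :: "'a \<Rightarrow> real"
  assumes P: "prob_space P" and Q: "prob_space Q" and sets_eq: "sets Q = sets P"
    and g: "g \<in> borel_measurable P" "\<forall>x \<in> space P. \<bar>g x\<bar> \<le> B"
  obtains \<nu> p q where "density_pair \<nu> p q P Q"
    and "renyi_pos \<alpha> Q P = (if 1 < \<alpha> \<and> \<not> absolutely_continuous P Q then \<infinity>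
                            else renyi_val \<alpha> (renyi_integral \<alpha> \<nu> p q))"
    and "g \<in> borel_measurable \<nu>"
    and "\<And>c. (\<integral>\<^sup>+x. ennreal (p x * exp (c * g x)) \<partial>\<nu>) = ennreal (\<integral>x. exp (c * g x) \<partial>P)"
    and "\<And>c. (\<integral>\<^sup>+x. ennreal (q x * exp (c * g x)) \<partial>\<nu>) = ennreal (\<integral>x. exp (c * g x) \<partial>Q)"
proof -
  obtain \<nu> p q where dp: "density_pair \<nu> p q P Q" and R: "renyi_pos \<alpha> Q P =
      (if 1 < \<alpha> \<and> \<not> absolutely_continuous P Q then \<infinity> else renyi_val \<alpha> (renyi_integral \<alpha> \<nu> p q))"
    using renyi_pos_density_pair[OF prob_space.finite_measure[OF P] prob_space.finite_measure[OF Q] sets_eq] .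
  note \<nu> = density_pairD[OF dp]
  note gQ = bounded_measurable_cong_sets[OF sets_eq g]
  show thesis
  proof (rule that[OF dp R])
    show "g \<in> borel_measurable \<nu>"
      using g(1) by (simp add: measurable_cong_sets[OF \<nu>(2) refl])
    show "(\<integral>\<^sup>+x. ennreal (p x * exp (c * g x)) \<partial>\<nu>) = ennreal (\<integral>x. exp (c * g x) \<partial>P)" for c
      using \<nu> integrable_exp_mult[OF prob_space.finite_measure[OF P] g]
      by (intro nn_integral_density_mult_eq_integral) auto
    show "(\<integral>\<^sup>+x. ennreal (q x * exp (c * g x)) \<partial>\<nu>) = ennreal (\<integral>x. exp (c * g x) \<partial>Q)" for c
      using \<nu> integrable_exp_mult[OF prob_space.finite_measure[OF Q] gQ]
      by (intro nn_integral_density_mult_eq_integral) auto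
  qed
qed

lemma renyi_pos_gt1_exp_bound:
  fixes P Q :: "'a measure" and g :: "'a \<Rightarrow> real"
  assumes P: "prob_space P" and Q: "prob_space Q" and sets_eq: "sets Q = sets P"
    and g: "g \<in> borel_measurable P" "\<forall>x \<in> space P. \<bar>g x\<bar> \<le> B"
    and a: "1 < a" and st: "(a - 1) * t = a * s"
  shows "ereal (a * ln (\<integral>x. exp (s * g x) \<partial>Q) - (a - 1) * ln (\<integral>x. exp (t * g x) \<partial>P))
    \<le> ereal (a * (a - 1)) * renyi_pos a Q P"
proof -
  obtain \<nu> p q where dp: "density_pair \<nu> p q P Q" and R: "renyi_pos a Q P =
      (if 1 < a \<and> \<not> absolutely_continuous P Q then \<infinity> else renyi_val a (renyi_integral a \<nu> p q))"
    and g\<nu>: "g \<in> borel_measurable \<nu>"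
    and int_P: "\<And>c. (\<integral>\<^sup>+x. ennreal (p x * exp (c * g x)) \<partial>\<nu>) = ennreal (\<integral>x. exp (c * g x) \<partial>P)"
    and int_Q: "\<And>c. (\<integral>\<^sup>+x. ennreal (q x * exp (c * g x)) \<partial>\<nu>) = ennreal (\<integral>x. exp (c * g x) \<partial>Q)"
    using renyi_pos_density_pair_exp[OF P Q sets_eq g, where \<alpha> = a] by blast
  note \<nu> = density_pairD[OF dp]
  define EQ where "EQ = (\<integral>x. exp (s * g x) \<partial>Q)"
  define EP where "EP = (\<integral>x. exp (t * g x) \<partial>P)"
  have EQ: "0 < EQ" and EP: "0 < EP"
    using integral_exp_mult_pos[OF Q bounded_measurable_cong_sets[OF sets_eq g]]
      integral_exp_mult_pos[OF P g] by (auto simp: EQ_def EP_def)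
  have aa: "0 < a * (a - 1)" using a by simp
  show ?thesis
  proof (cases "absolutely_continuous P Q \<and> renyi_integral a \<nu> p q \<noteq> \<top>")
    case False
    then have "renyi_pos a Q P = \<infinity>" using R a by (auto simp: renyi_val_def)
    then show ?thesis using aa a by simp
  next
    case True
    then obtain I where I: "renyi_integral a \<nu> p q = ennreal I" "0 \<le> I"
      by (cases "renyi_integral a \<nu> p q") auto
    have "ennreal EQ \<le> ennreal (I powr (1 / a) * EP powr ((a - 1) / a))"
      unfolding EQ_def EP_def int_Q[symmetric]
    proof (rule renyi_integral_Holder_gt1[OF a _ \<nu>(3,5,4,6) _ _ I int_P])
      show "(a - 1) * (t * g x) = a * (s * g x)" for x by (metis st mult.assoc)
      show "AE x in \<nu>. p x \<le> 0 \<longrightarrow> q x = 0"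
        using True \<nu> by (intro AE_density_zero_if_absolutely_continuous) auto
    qed (use g\<nu> EP in \<open>auto simp: EP_def\<close>)
    then have le: "EQ \<le> I powr (1 / a) * EP powr ((a - 1) / a)"
      using EQ by (simp add: ennreal_le_iff)
    then have I_pos: "0 < I" using EQ I(2) by (cases "I = 0") auto
    have "ln EQ \<le> ln (I powr (1 / a) * EP powr ((a - 1) / a))"
      using le EQ by simp
    also have "\<dots> = (ln I + (a - 1) * ln EP) / a"
      using I_pos EP a by (simp add: ln_mult ln_powr field_simps)
    finally have "a * ln EQ - (a - 1) * ln EP \<le> ln I"
      using a by (simp add: field_simps)
    moreover have "renyi_pos a Q P = ereal (ln I / (a * (a - 1)))"
      using R True I I_pos by (simp add: renyi_val_def)
    ultimately show ?thesis
      unfolding EQ_def EP_def using aa a by simp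
  qed
qed

lemma renyi_pos_lt1_exp_bound:
  fixes P Q :: "'a measure" and g :: "'a \<Rightarrow> real"
  assumes P: "prob_space P" and Q: "prob_space Q" and sets_eq: "sets Q = sets P"
    and g: "g \<in> borel_measurable P" "\<forall>x \<in> space P. \<bar>g x\<bar> \<le> B"
    and a: "0 < a" "a < 1" and st: "a * s + (1 - a) * t = 0"
  shows "ereal (a * (a - 1)) * renyi_pos a Q P
    \<le> ereal (a * ln (\<integral>x. exp (s * g x) \<partial>Q) + (1 - a) * ln (\<integral>x. exp (t * g x) \<partial>P))"
proof -
  obtain \<nu> p q where dp: "density_pair \<nu> p q P Q" and R': "renyi_pos a Q P =
      (if 1 < a \<and> \<not> absolutely_continuous P Q then \<infinity> else renyi_val a (renyi_integral a \<nu> p q))"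
    and g\<nu>: "g \<in> borel_measurable \<nu>"
    and int_P: "\<And>c. (\<integral>\<^sup>+x. ennreal (p x * exp (c * g x)) \<partial>\<nu>) = ennreal (\<integral>x. exp (c * g x) \<partial>P)"
    and int_Q: "\<And>c. (\<integral>\<^sup>+x. ennreal (q x * exp (c * g x)) \<partial>\<nu>) = ennreal (\<integral>x. exp (c * g x) \<partial>Q)"
    using renyi_pos_density_pair_exp[OF P Q sets_eq g, where \<alpha> = a] by blast
  note \<nu> = density_pairD[OF dp]
  have R: "renyi_pos a Q P = renyi_val a (renyi_integral a \<nu> p q)" using R' a by simp
  define EQ where "EQ = (\<integral>x. exp (s * g x) \<partial>Q)"
  define EP where "EP = (\<integral>x. exp (t * g x) \<partial>P)"
  have EQ: "0 < EQ" and EP: "0 < EP"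
    using integral_exp_mult_pos[OF Q bounded_measurable_cong_sets[OF sets_eq g]]
      integral_exp_mult_pos[OF P g] by (auto simp: EQ_def EP_def)
  have le: "renyi_integral a \<nu> p q \<le> ennreal (EQ powr a * EP powr (1 - a))"
    unfolding EQ_def EP_def
  proof (rule renyi_integral_Holder_lt1[OF a _ \<nu>(3,5,4,6) _ _ int_Q _ int_P])
    show "a * (s * g x) + (1 - a) * (t * g x) = 0" for x
    proof -
      have "(a * s + (1 - a) * t) * g x = 0" using st by simp
      then show ?thesis by (simp add: algebra_simps)
    qed
  qed (use g\<nu> EQ EP in \<open>auto simp: EQ_def EP_def less_imp_le\<close>)
  have aa: "a * (a - 1) < 0" using a by (simp add: mult_pos_neg)
  show ?thesis
  proof (cases "renyi_integral a \<nu> p q = 0")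
    case True
    then show ?thesis using R aa a by (simp add: renyi_val_def)
  next
    case False
    obtain I where I: "renyi_integral a \<nu> p q = ennreal I" "0 < I"
      using False le by (cases "renyi_integral a \<nu> p q") (auto simp: top_unique)
    have "ln I \<le> ln (EQ powr a * EP powr (1 - a))"
      using le I EQ EP by (simp add: ennreal_le_iff)
    also have "\<dots> = a * ln EQ + (1 - a) * ln EP"
      using EQ EP by (simp add: ln_mult ln_powr)
    finally have "ln I \<le> a * ln EQ + (1 - a) * ln EP" .
    moreover have "renyi_pos a Q P = ereal (ln I / (a * (a - 1)))"
      using R I by (simp add: renyi_val_def)
    ultimately show ?thesis
      unfolding EQ_def EP_def using aa a by simp
  qed
qed

lemma renyi_pos_self:
  assumes P: "prob_space P"
  shows "renyi_pos \<alpha> P P = 0"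
proof -
  have fin: "finite_measure P" using P by (rule prob_space.finite_measure)
  obtain \<nu> p q where dp: "density_pair \<nu> p q P P" and R: "renyi_pos \<alpha> P P =
      (if 1 < \<alpha> \<and> \<not> absolutely_continuous P P then \<infinity> else renyi_val \<alpha> (renyi_integral \<alpha> \<nu> p q))"
    using renyi_pos_density_pair[OF fin fin refl] .
  have sf: "sigma_finite_measure \<nu>" and p: "p \<in> borel_measurable \<nu>" and q: "q \<in> borel_measurable \<nu>"
    and nonneg: "\<And>x. x \<in> space \<nu> \<Longrightarrow> 0 \<le> p x \<and> 0 \<le> q x"
    and P_p: "P = density \<nu> (\<lambda>x. ennreal (p x))" and P_q: "P = density \<nu> (\<lambda>x. ennreal (q x))"
    using density_pairD[OF dp] by auto
  have "AE x in \<nu>. ennreal (p x) = ennreal (q x)"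
    using sigma_finite_measure.density_unique[OF sf _ _ P_p[symmetric, THEN trans, OF P_q]] p q by auto
  then have AE_eq: "AE x in \<nu>. p x = q x"
    using AE_space by eventually_elim (use nonneg in auto)
  have "renyi_integral \<alpha> \<nu> p q = (\<integral>\<^sup>+x. ennreal (p x * 1) \<partial>\<nu>)"
    unfolding renyi_integral_def
  proof (rule nn_integral_cong_AE)
    show "AE x in \<nu>. ennreal (indicator {y. 0 < p y} x * q x powr \<alpha> * p x powr (1 - \<alpha>)) = ennreal (p x * 1)"
      using AE_eq AE_space
      by eventually_elim (use nonneg in \<open>auto simp: indicator_def powr_add[symmetric] less_le\<close>)
  qed
  also have "\<dots> = ennreal (\<integral>x. 1 \<partial>P)"
    using nonneg finite_measure.integrable_const[OF fin]
    by (intro nn_integral_density_mult_eq_integral[OF p _ P_p]) auto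
  also have "\<dots> = 1"
    by (simp add: prob_space.prob_space[OF P])
  finally show ?thesis
    using R by (simp add: renyi_val_def absolutely_continuous_def)
qed

lemma renyi_self:
  assumes "prob_space P"
  shows "renyi \<alpha> P P = 0"
  using renyi_pos_self[OF assms] by (simp add: renyi_def)

lemma renyi_pos_swap:
  assumes a: "0 < a" "a < 1"
  shows "renyi_pos a Q P = renyi_pos (1 - a) P Q"
proof -
  have integral_swap: "renyi_integral a \<nu> p q = renyi_integral (1 - a) \<nu> q p"
    if "density_pair \<nu> p q P Q" for \<nu> p q
    using that a unfolding renyi_integral_def density_pair_def
    by (intro nn_integral_cong) (auto simp: indicator_def)
  have val_swap: "renyi_val a = renyi_val (1 - a)"
    by (simp add: renyi_val_def algebra_simps fun_eq_iff)
  have "(\<exists>\<nu> p q. density_pair \<nu> p q P Q \<and> r = renyi_val a (renyi_integral a \<nu> p q)) \<longleftrightarrow>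
        (\<exists>\<nu> p q. density_pair \<nu> p q Q P \<and> r = renyi_val (1 - a) (renyi_integral (1 - a) \<nu> p q))" for r
  proof
    assume "\<exists>\<nu> p q. density_pair \<nu> p q P Q \<and> r = renyi_val a (renyi_integral a \<nu> p q)"
    then obtain \<nu> p q where "density_pair \<nu> p q P Q" "r = renyi_val a (renyi_integral a \<nu> p q)"
      by blast
    then show "\<exists>\<nu> p q. density_pair \<nu> p q Q P \<and> r = renyi_val (1 - a) (renyi_integral (1 - a) \<nu> p q)"
      using integral_swap[of \<nu> p q] val_swap density_pair_swap[of \<nu> p q P Q]
      by (intro exI[of _ \<nu>] exI[of _ q] exI[of _ p]) simp
  next
    assume "\<exists>\<nu> p q. density_pair \<nu> p q Q P \<and> r = renyi_val (1 - a) (renyi_integral (1 - a) \<nu> p q)"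
    then obtain \<nu> p q where "density_pair \<nu> q p P Q" "r = renyi_val (1 - a) (renyi_integral (1 - a) \<nu> p q)"
      using density_pair_swap by blast
    then show "\<exists>\<nu> p q. density_pair \<nu> p q P Q \<and> r = renyi_val a (renyi_integral a \<nu> p q)"
      using integral_swap[of \<nu> q p] val_swap by (intro exI[of _ \<nu>] exI[of _ q] exI[of _ p]) simp
  qed
  then show ?thesis
    using a unfolding renyi_pos_altdef by simp
qed

lemma renyi_swap:
  assumes "\<alpha> \<noteq> 0" "\<alpha> \<noteq> 1"
  shows "renyi \<alpha> Q P = renyi (1 - \<alpha>) P Q"
  using assms renyi_pos_swap[of \<alpha> Q P] by (auto simp: renyi_def)

section \<open>The Renyi variational inequality\<close>

lemma renyi_exp_bound_pos:
  fixes P Q :: "'a measure" and g :: "'a \<Rightarrow> real"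
  assumes P: "prob_space P" and Q: "prob_space Q" and sets_eq: "sets Q = sets P"
    and g: "g \<in> borel_measurable P" "\<forall>x \<in> space P. \<bar>g x\<bar> \<le> B"
    and \<gamma>\<beta>: "0 < \<gamma>" "\<gamma> < \<beta>"
  shows "ereal ((\<beta> * ln (\<integral>x. exp (\<gamma> * g x) \<partial>Q) - \<gamma> * ln (\<integral>x. exp (\<beta> * g x) \<partial>P)) / (\<beta> - \<gamma>))
    \<le> ereal (\<beta> * \<gamma> / (\<beta> - \<gamma>)\<^sup>2) * renyi (\<beta> / (\<beta> - \<gamma>)) Q P"
proof -
  define a where "a = \<beta> / (\<beta> - \<gamma>)"
  have a: "1 < a" "(a - 1) * \<beta> = a * \<gamma>" and a_minus_1: "a - 1 = \<gamma> / (\<beta> - \<gamma>)"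
    using \<gamma>\<beta> unfolding a_def by (simp_all add: field_simps)
  have "renyi (\<beta> / (\<beta> - \<gamma>)) Q P = renyi_pos a Q P"
    using a by (simp add: renyi_def a_def)
  moreover have "a * (a - 1) = \<beta> * \<gamma> / (\<beta> - \<gamma>)\<^sup>2"
    unfolding a_minus_1 unfolding a_def by (simp add: power2_eq_square)
  moreover have "a * L - (a - 1) * L' = (\<beta> * L - \<gamma> * L') / (\<beta> - \<gamma>)" for L L'
    unfolding a_minus_1 unfolding a_def by (simp add: diff_divide_distrib)
  ultimately show ?thesis
    using renyi_pos_gt1_exp_bound[OF P Q sets_eq g a] by simp
qed

lemma renyi_exp_bound_mixed:
  fixes P Q :: "'a measure" and g :: "'a \<Rightarrow> real"
  assumes P: "prob_space P" and Q: "prob_space Q" and sets_eq: "sets Q = sets P"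
    and g: "g \<in> borel_measurable P" "\<forall>x \<in> space P. \<bar>g x\<bar> \<le> B"
    and \<gamma>\<beta>: "\<gamma> < 0" "0 < \<beta>"
  shows "ereal (\<beta> * \<gamma> / (\<beta> - \<gamma>)\<^sup>2) * renyi (\<beta> / (\<beta> - \<gamma>)) Q P
    \<le> ereal ((\<beta> * ln (\<integral>x. exp (\<gamma> * g x) \<partial>Q) - \<gamma> * ln (\<integral>x. exp (\<beta> * g x) \<partial>P)) / (\<beta> - \<gamma>))"
proof -
  define a where "a = \<beta> / (\<beta> - \<gamma>)"
  have a: "0 < a" "a < 1" "a * \<gamma> + (1 - a) * \<beta> = 0"
    and a_minus_1: "a - 1 = \<gamma> / (\<beta> - \<gamma>)" and one_minus_a: "1 - a = - \<gamma> / (\<beta> - \<gamma>)"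
    using \<gamma>\<beta> unfolding a_def by (simp_all add: field_simps)
  have "renyi (\<beta> / (\<beta> - \<gamma>)) Q P = renyi_pos a Q P"
    using a by (simp add: renyi_def a_def)
  moreover have "a * (a - 1) = \<beta> * \<gamma> / (\<beta> - \<gamma>)\<^sup>2"
    unfolding a_minus_1 unfolding a_def by (simp add: power2_eq_square)
  moreover have "a * L + (1 - a) * L' = (\<beta> * L - \<gamma> * L') / (\<beta> - \<gamma>)" for L L'
    unfolding one_minus_a unfolding a_def by (simp add: diff_divide_distrib)
  ultimately show ?thesis
    using renyi_pos_lt1_exp_bound[OF P Q sets_eq g a] by simp
qed

lemma renyi_exp_bound_neg:
  fixes P Q :: "'a measure" and g :: "'a \<Rightarrow> real"
  assumes P: "prob_space P" and Q: "prob_space Q" and sets_eq: "sets Q = sets P"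
    and g: "g \<in> borel_measurable P" "\<forall>x \<in> space P. \<bar>g x\<bar> \<le> B"
    and \<gamma>\<beta>: "\<gamma> < \<beta>" "\<beta> < 0"
  shows "ereal ((\<beta> * ln (\<integral>x. exp (\<gamma> * g x) \<partial>Q) - \<gamma> * ln (\<integral>x. exp (\<beta> * g x) \<partial>P)) / (\<beta> - \<gamma>))
    \<le> ereal (\<beta> * \<gamma> / (\<beta> - \<gamma>)\<^sup>2) * renyi (\<beta> / (\<beta> - \<gamma>)) Q P"
proof -
  define b where "b = - \<gamma> / (\<beta> - \<gamma>)"
  have b: "1 < b" "(b - 1) * \<gamma> = b * \<beta>" and b_minus_1: "b - 1 = - \<beta> / (\<beta> - \<gamma>)"
    and "\<beta> / (\<beta> - \<gamma>) < 0" "1 - \<beta> / (\<beta> - \<gamma>) = b"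
    using \<gamma>\<beta> unfolding b_def by (simp_all add: divide_neg_pos field_simps)
  then have "renyi (\<beta> / (\<beta> - \<gamma>)) Q P = renyi_pos b P Q"
    by (simp add: renyi_def)
  moreover have "b * (b - 1) = \<beta> * \<gamma> / (\<beta> - \<gamma>)\<^sup>2"
    unfolding b_minus_1 unfolding b_def by (simp add: power2_eq_square)
  moreover have "b * L' - (b - 1) * L = (\<beta> * L - \<gamma> * L') / (\<beta> - \<gamma>)" for L L'
    unfolding b_minus_1 unfolding b_def by (simp add: diff_divide_distrib algebra_simps)
  ultimately show ?thesis
    using renyi_pos_gt1_exp_bound[OF Q P sets_eq[symmetric] bounded_measurable_cong_sets[OF sets_eq g] b]
    by simp
qed

lemma cgf_term_diff_le_renyi:
  fixes P Q :: "'a measure" and g :: "'a \<Rightarrow> real"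
  assumes P: "prob_space P" and Q: "prob_space Q" and sets_eq: "sets Q = sets P"
    and g: "g \<in> borel_measurable P" "\<forall>x \<in> space P. \<bar>g x\<bar> \<le> B"
    and \<gamma>: "\<gamma> \<noteq> 0" and \<beta>: "\<beta> \<noteq> 0" "\<gamma> < \<beta>"
  shows "ereal (cgf_term Q g \<gamma> - cgf_term P g \<beta>) \<le> ereal (1 / (\<beta> - \<gamma>)) * renyi (\<beta> / (\<beta> - \<gamma>)) Q P"
proof -
  define LQ where "LQ = ln (\<integral>x. exp (\<gamma> * g x) \<partial>Q)"
  define LP where "LP = ln (\<integral>x. exp (\<beta> * g x) \<partial>P)"
  define k where "k = \<beta> * \<gamma> / (\<beta> - \<gamma>)"
  have d: "0 < \<beta> - \<gamma>" using \<beta> by simp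
  have "(\<beta> * LQ - \<gamma> * LP) / (\<beta> - \<gamma>) / k = LQ / \<gamma> - LP / \<beta>"
    using \<gamma> \<beta> d unfolding k_def by (simp add: field_simps)
  then have lhs: "cgf_term Q g \<gamma> - cgf_term P g \<beta> = (\<beta> * LQ - \<gamma> * LP) / (\<beta> - \<gamma>) / k"
    by (simp add: cgf_term_def LQ_def LP_def)
  have rhs: "1 / (\<beta> - \<gamma>) = \<beta> * \<gamma> / (\<beta> - \<gamma>)\<^sup>2 / k"
    using \<gamma> \<beta> d unfolding k_def by (simp add: power2_eq_square)
  consider "0 < \<gamma>" | "\<gamma> < 0" "0 < \<beta>" | "\<beta> < 0"
    using \<gamma> \<beta> by linarith
  then show ?thesis
  proof cases
    case 1
    then have "0 < k" using d by (simp add: k_def)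
    then show ?thesis
      unfolding lhs rhs LQ_def LP_def
      by (rule ereal_le_mult_rescale) (rule renyi_exp_bound_pos[OF P Q sets_eq g 1 \<beta>(2)])
  next
    case 2
    then have "0 < - k" using d divide_neg_pos[OF mult_pos_neg[of \<beta> \<gamma>]] by (simp add: k_def)
    from ereal_mult_le_rescale_neg[OF this renyi_exp_bound_mixed[OF P Q sets_eq g 2]]
    show ?thesis
      unfolding lhs rhs LQ_def LP_def by simp
  next
    case 3
    then have "0 < k" using d by (simp add: k_def mult_neg_neg)
    then show ?thesis
      unfolding lhs rhs LQ_def LP_def
      by (rule ereal_le_mult_rescale) (rule renyi_exp_bound_neg[OF P Q sets_eq g \<beta>(2) 3])
  qed
qed

lemma cgf_term_mono:
  fixes M :: "'a measure" and g :: "'a \<Rightarrow> real"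
  assumes M: "prob_space M" and g: "g \<in> borel_measurable M" "\<forall>x \<in> space M. \<bar>g x\<bar> \<le> B"
    and \<gamma>: "\<gamma> \<noteq> 0" and \<beta>: "\<beta> \<noteq> 0" "\<gamma> \<le> \<beta>"
  shows "cgf_term M g \<gamma> \<le> cgf_term M g \<beta>"
proof (cases "\<gamma> = \<beta>")
  case False
  then have "ereal (cgf_term M g \<gamma> - cgf_term M g \<beta>) \<le> ereal (1 / (\<beta> - \<gamma>)) * renyi (\<beta> / (\<beta> - \<gamma>)) M M"
    using \<gamma> \<beta> by (intro cgf_term_diff_le_renyi[OF M M refl g]) auto
  then show ?thesis using renyi_self[OF M] by simp
qed simp

lemma renyi_nonneg:
  fixes P Q :: "'a measure"
  assumes P: "prob_space P" and Q: "prob_space Q" and sets_eq: "sets Q = sets P"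
    and \<alpha>: "\<alpha> \<noteq> 0" "\<alpha> \<noteq> 1"
  shows "0 \<le> renyi \<alpha> Q P"
proof -
  have "ereal (cgf_term Q (\<lambda>_. 0) (\<alpha> - 1) - cgf_term P (\<lambda>_. 0) \<alpha>)
      \<le> ereal (1 / (\<alpha> - (\<alpha> - 1))) * renyi (\<alpha> / (\<alpha> - (\<alpha> - 1))) Q P"
    using \<alpha> by (intro cgf_term_diff_le_renyi[OF P Q sets_eq, where B = 0]) auto
  then show ?thesis by (simp add: cgf_term_zero[OF P] cgf_term_zero[OF Q] zero_ereal_def)
qed

section \<open>The bounds Xi_plus and Xi_minus\<close>

lemma Xi_plus_lower_bound:
  fixes P Q :: "'a measure" and g :: "'a \<Rightarrow> real"
  assumes P: "prob_space P" and Q: "prob_space Q" and sets_eq: "sets Q = sets P"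
    and g: "g \<in> borel_measurable P" "\<forall>x \<in> space P. \<bar>g x\<bar> \<le> B" and \<gamma>: "\<gamma> \<noteq> 0"
  shows "ereal (cgf_term Q g \<gamma> - cgf_term P g \<gamma>) \<le> Xi_plus \<gamma> Q P g"
  unfolding Xi_plus_def
proof (rule INF_greatest)
  fix \<beta> assume "\<beta> \<in> {\<beta>. \<beta> > \<gamma> \<and> \<beta> \<noteq> 0}"
  then have "ereal (cgf_term Q g \<gamma> - cgf_term P g \<beta>) \<le> ereal (1 / (\<beta> - \<gamma>)) * renyi (\<beta> / (\<beta> - \<gamma>)) Q P"
    using \<gamma> by (intro cgf_term_diff_le_renyi[OF P Q sets_eq g]) auto
  then have "ereal (cgf_term P g \<beta> - cgf_term P g \<gamma>) + ereal (cgf_term Q g \<gamma> - cgf_term P g \<beta>)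
      \<le> ereal (cgf_term P g \<beta> - cgf_term P g \<gamma>) + ereal (1 / (\<beta> - \<gamma>)) * renyi (\<beta> / (\<beta> - \<gamma>)) Q P"
    by (rule add_left_mono)
  then show "ereal (cgf_term Q g \<gamma> - cgf_term P g \<gamma>)
      \<le> ereal (cgf_term P g \<beta> - cgf_term P g \<gamma>) + ereal (1 / (\<beta> - \<gamma>)) * renyi (\<beta> / (\<beta> - \<gamma>)) Q P"
    by simp
qed

lemma renyi_term_nonneg:
  fixes P Q :: "'a measure"
  assumes P: "prob_space P" and Q: "prob_space Q" and sets_eq: "sets Q = sets P"
    and \<gamma>: "\<gamma> \<noteq> 0" and \<beta>: "\<gamma> < \<beta>" "\<beta> \<noteq> 0"
  shows "0 \<le> ereal (1 / (\<beta> - \<gamma>)) * renyi (\<beta> / (\<beta> - \<gamma>)) Q P"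
proof -
  have "0 \<le> renyi (\<beta> / (\<beta> - \<gamma>)) Q P"
    using \<gamma> \<beta> by (intro renyi_nonneg[OF P Q sets_eq]) (auto simp: field_simps)
  then show ?thesis using \<beta> by simp
qed

lemma Xi_plus_nonneg:
  fixes P Q :: "'a measure" and g :: "'a \<Rightarrow> real"
  assumes P: "prob_space P" and Q: "prob_space Q" and sets_eq: "sets Q = sets P"
    and g: "g \<in> borel_measurable P" "\<forall>x \<in> space P. \<bar>g x\<bar> \<le> B" and \<gamma>: "\<gamma> \<noteq> 0"
  shows "0 \<le> Xi_plus \<gamma> Q P g"
  unfolding Xi_plus_def
proof (rule INF_greatest)
  fix \<beta> assume "\<beta> \<in> {\<beta>. \<beta> > \<gamma> \<and> \<beta> \<noteq> 0}"
  then have \<beta>: "\<gamma> < \<beta>" "\<beta> \<noteq> 0" by auto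
  have "cgf_term P g \<gamma> \<le> cgf_term P g \<beta>"
    using cgf_term_mono[OF P g \<gamma> \<beta>(2)] \<beta> by simp
  then show "0 \<le> ereal (cgf_term P g \<beta> - cgf_term P g \<gamma>) + ereal (1 / (\<beta> - \<gamma>)) * renyi (\<beta> / (\<beta> - \<gamma>)) Q P"
    using renyi_term_nonneg[OF P Q sets_eq \<gamma> \<beta>] by (intro add_nonneg_nonneg) auto
qed

lemma Xi_plus_self:
  fixes P :: "'a measure" and g :: "'a \<Rightarrow> real"
  assumes P: "prob_space P" and g: "g \<in> borel_measurable P" "\<forall>x \<in> space P. \<bar>g x\<bar> \<le> B"
    and \<gamma>: "\<gamma> \<noteq> 0"
  shows "Xi_plus \<gamma> P P g = 0"
proof (rule antisym)
  have ev: "\<forall>\<^sub>F \<beta> in at_right \<gamma>. Xi_plus \<gamma> P P g \<le> ereal (cgf_term P g \<beta> - cgf_term P g \<gamma>)"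
    using eventually_at_right_nonzero[OF \<gamma>]
  proof eventually_elim
    case (elim \<beta>)
    then have "Xi_plus \<gamma> P P g
        \<le> ereal (cgf_term P g \<beta> - cgf_term P g \<gamma>) + ereal (1 / (\<beta> - \<gamma>)) * renyi (\<beta> / (\<beta> - \<gamma>)) P P"
      unfolding Xi_plus_def by (intro INF_lower) auto
    then show ?case using renyi_self[OF P] by simp
  qed
  have lim: "((\<lambda>\<beta>. ereal (cgf_term P g \<beta> - cgf_term P g \<gamma>)) \<longlongrightarrow> ereal 0) (at_right \<gamma>)"
    using tendsto_cgf_term_at_right[OF P g \<gamma>] by (intro tendsto_ereal LIM_zero)
  from tendsto_le[OF trivial_limit_at_right_real lim tendsto_const ev]
  show "Xi_plus \<gamma> P P g \<le> 0"
    by (simp add: zero_ereal_def)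
  show "0 \<le> Xi_plus \<gamma> P P g"
    by (rule Xi_plus_nonneg[OF P P refl g \<gamma>])
qed

lemma prob_space_neq_obtain_measure_less:
  fixes P Q :: "'a measure"
  assumes P: "prob_space P" and Q: "prob_space Q" and sets_eq: "sets Q = sets P" and neq: "Q \<noteq> P"
  obtains A where "A \<in> sets P" "measure P A < measure Q A"
proof -
  interpret P: prob_space P by fact
  interpret Q: prob_space Q by fact
  obtain A where A: "A \<in> sets P" "measure Q A \<noteq> measure P A"
    using neq measure_eqI[OF sets_eq] sets_eq by (metis P.emeasure_eq_measure Q.emeasure_eq_measure)
  show thesis
  proof (cases "measure P A < measure Q A")
    case True
    with A(1) show thesis by (rule that)
  next
    case False
    have "measure P (space P - A) = 1 - measure P A" "measure Q (space P - A) = 1 - measure Q A"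
      using A P.prob_compl Q.prob_compl sets_eq sets_eq_imp_space_eq[OF sets_eq] by auto
    then show thesis
      using False A by (intro that[of "space P - A"]) auto
  qed
qed

lemma cgf_term_separating_indicator:
  fixes P Q :: "'a measure"
  assumes P: "prob_space P" and Q: "prob_space Q" and sets_eq: "sets Q = sets P"
    and neq: "Q \<noteq> P" and \<gamma>: "\<gamma> \<noteq> 0"
  obtains h :: "'a \<Rightarrow> real" where "h \<in> borel_measurable P" "\<forall>x \<in> space P. \<bar>h x\<bar> \<le> 1"
    and "cgf_term P h \<gamma> < cgf_term Q h \<gamma>"
proof -
  obtain A where A: "A \<in> sets P" "measure P A < measure Q A"
    using prob_space_neq_obtain_measure_less[OF P Q sets_eq neq] .
  have "A \<in> sets Q" unfolding sets_eq by (rule A(1))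
  have "cgf_term P (indicator A) \<gamma> < cgf_term Q (indicator A) \<gamma>"
    unfolding cgf_term_indicator[OF P A(1)] cgf_term_indicator[OF Q \<open>A \<in> sets Q\<close>]
    by (rule ln_affine_exp_div_strict_mono[OF \<gamma> measure_nonneg A(2) prob_space.prob_le_1[OF Q]])
  moreover have "indicator A \<in> borel_measurable P" "\<forall>x \<in> space P. \<bar>indicator A x :: real\<bar> \<le> 1"
    using A(1) by (auto simp: indicator_def)
  ultimately show thesis by (intro that)
qed

lemma Xi_plus_pos:
  fixes P Q :: "'a measure" and g :: "'a \<Rightarrow> real"
  assumes P: "prob_space P" and Q: "prob_space Q" and sets_eq: "sets Q = sets P"
    and g: "g \<in> borel_measurable P" "\<forall>x \<in> space P. \<bar>g x\<bar> \<le> B" and \<gamma>: "\<gamma> \<noteq> 0"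
    and nonconst: "\<not> (\<exists>c. AE x in P. g x = c)" and neq: "Q \<noteq> P"
  shows "0 < Xi_plus \<gamma> Q P g"
proof -
  obtain h where h: "h \<in> borel_measurable P" "\<forall>x \<in> space P. \<bar>h x\<bar> \<le> 1"
    and separates: "cgf_term P h \<gamma> < cgf_term Q h \<gamma>"
    using cgf_term_separating_indicator[OF P Q sets_eq neq \<gamma>] .
  define \<delta> where "\<delta> = (cgf_term Q h \<gamma> - cgf_term P h \<gamma>) / 2"
  have \<delta>: "0 < \<delta>" using separates by (simp add: \<delta>_def)
  obtain \<beta>\<^sub>1 where \<beta>\<^sub>1: "\<gamma> < \<beta>\<^sub>1" "\<beta>\<^sub>1 \<noteq> 0" "cgf_term P h \<beta>\<^sub>1 < cgf_term P h \<gamma> + \<delta>"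
    using cgf_term_right_close[OF P h \<gamma> \<delta>] .
  define \<eta> where "\<eta> = min \<delta> (cgf_term P g \<beta>\<^sub>1 - cgf_term P g \<gamma>)"
  have \<eta>: "0 < \<eta>"
    using \<delta> cgf_term_strict_mono[OF P g nonconst \<gamma> \<beta>\<^sub>1(2,1)] by (simp add: \<eta>_def)
  have \<eta>_le: "\<eta> \<le> \<delta>" "\<eta> \<le> cgf_term P g \<beta>\<^sub>1 - cgf_term P g \<gamma>"
    by (simp_all add: \<eta>_def)
  have "ereal \<eta> \<le> Xi_plus \<gamma> Q P g"
    unfolding Xi_plus_def
  proof (rule INF_greatest)
    fix \<beta> assume "\<beta> \<in> {\<beta>. \<beta> > \<gamma> \<and> \<beta> \<noteq> 0}"
    then have \<beta>: "\<gamma> < \<beta>" "\<beta> \<noteq> 0" by auto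
    have g_mono: "cgf_term P g \<gamma> \<le> cgf_term P g \<beta>"
      using cgf_term_mono[OF P g \<gamma> \<beta>(2)] \<beta> by simp
    show "ereal \<eta> \<le> ereal (cgf_term P g \<beta> - cgf_term P g \<gamma>)
        + ereal (1 / (\<beta> - \<gamma>)) * renyi (\<beta> / (\<beta> - \<gamma>)) Q P"
    proof (cases "\<beta> \<le> \<beta>\<^sub>1")
      case True
      have "cgf_term P h \<beta> \<le> cgf_term P h \<beta>\<^sub>1"
        using cgf_term_mono[OF P h \<beta>(2) \<beta>\<^sub>1(2) True] .
      then have "\<eta> \<le> cgf_term Q h \<gamma> - cgf_term P h \<beta>"
        using \<beta>\<^sub>1(3) \<eta>_le(1) unfolding \<delta>_def by (simp add: field_simps)
      then have "ereal \<eta> \<le> ereal (cgf_term Q h \<gamma> - cgf_term P h \<beta>)"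
        by simp
      also have "\<dots> \<le> ereal (1 / (\<beta> - \<gamma>)) * renyi (\<beta> / (\<beta> - \<gamma>)) Q P"
        by (rule cgf_term_diff_le_renyi[OF P Q sets_eq h \<gamma> \<beta>(2,1)])
      finally show ?thesis
        using g_mono by (intro add_increasing) auto
    next
      case False
      then have "cgf_term P g \<beta>\<^sub>1 \<le> cgf_term P g \<beta>"
        using cgf_term_mono[OF P g \<beta>\<^sub>1(2) \<beta>(2)] by simp
      then have "ereal \<eta> \<le> ereal (cgf_term P g \<beta> - cgf_term P g \<gamma>)"
        using \<eta>_le(2) by simp
      then show ?thesis
        using renyi_term_nonneg[OF P Q sets_eq \<gamma> \<beta>] by (intro add_increasing2)
    qed
  qed
  then show ?thesis
    using \<eta> by (metis ereal_less(2) order_less_le_trans)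
qed

lemma Xi_plus_eq_0_iff:
  fixes P Q :: "'a measure" and g :: "'a \<Rightarrow> real"
  assumes P: "prob_space P" and Q: "prob_space Q" and sets_eq: "sets Q = sets P"
    and g: "g \<in> borel_measurable P" "\<forall>x \<in> space P. \<bar>g x\<bar> \<le> B" and \<gamma>: "\<gamma> \<noteq> 0"
    and nonconst: "\<not> (\<exists>c. AE x in P. g x = c)"
  shows "Xi_plus \<gamma> Q P g = 0 \<longleftrightarrow> Q = P"
proof
  assume "Xi_plus \<gamma> Q P g = 0"
  then show "Q = P" using Xi_plus_pos[OF P Q sets_eq g \<gamma> nonconst] by fastforce
next
  assume "Q = P"
  then show "Xi_plus \<gamma> Q P g = 0" using Xi_plus_self[OF P g \<gamma>] by simp
qed

lemma Xi_minus_eq_uminus_Xi_plus: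
  fixes \<gamma> :: real
  assumes \<gamma>: "\<gamma> \<noteq> 0"
  shows "Xi_minus \<gamma> Q P g = - Xi_plus (- \<gamma>) Q P (\<lambda>x. - g x)"
proof -
  define S where "S = {\<beta>::real. \<beta> < \<gamma> \<and> \<beta> \<noteq> 0}"
  define F where "F = (\<lambda>\<beta>. ereal (cgf_term P (\<lambda>x. - g x) \<beta> - cgf_term P (\<lambda>x. - g x) (- \<gamma>))
      + ereal (1 / (\<beta> - - \<gamma>)) * renyi (\<beta> / (\<beta> - - \<gamma>)) Q P)"
  have reflected: "{\<beta>. \<beta> > - \<gamma> \<and> \<beta> \<noteq> 0} = uminus ` S"
    unfolding S_def by (auto intro: image_eqI[where x="- _"])
  have "Xi_plus (- \<gamma>) Q P (\<lambda>x. - g x) = (INF \<beta>\<in>uminus ` S. F \<beta>)"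
    unfolding Xi_plus_def F_def reflected ..
  also have "\<dots> = (INF \<beta>\<in>S. F (- \<beta>))"
    by (simp add: image_comp)
  finally have "- Xi_plus (- \<gamma>) Q P (\<lambda>x. - g x) = (SUP \<beta>\<in>S. - F (- \<beta>))"
    by (simp add: ereal_SUP_uminus_eq)
  also have "\<dots> = Xi_minus \<gamma> Q P g"
    unfolding Xi_minus_def S_def[symmetric]
  proof (rule SUP_cong[OF refl])
    fix \<beta> assume "\<beta> \<in> S"
    then have \<beta>: "\<beta> < \<gamma>" "\<beta> \<noteq> 0" unfolding S_def by auto
    have diff: "- \<beta> - - \<gamma> = \<gamma> - \<beta>" by simp
    have swap: "renyi (- \<beta> / (\<gamma> - \<beta>)) Q P = renyi (\<gamma> / (\<gamma> - \<beta>)) P Q"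
      using renyi_swap[of "- \<beta> / (\<gamma> - \<beta>)" Q P] \<beta> \<gamma> by (auto simp: field_simps)
    have uminus_plus: "- (ereal x + y) = ereal (- x) - y" for x and y :: ereal
      by (cases y) auto
    show "- F (- \<beta>)
        = ereal (cgf_term P g \<beta> - cgf_term P g \<gamma>) - ereal (1 / (\<gamma> - \<beta>)) * renyi (\<gamma> / (\<gamma> - \<beta>)) P Q"
      unfolding F_def diff swap cgf_term_uminus uminus_plus by simp
  qed
  finally show ?thesis ..
qed

lemma ex_AE_eq_const_uminus:
  "(\<exists>c. AE x in M. - g x = c) \<longleftrightarrow> (\<exists>c. AE x in M. g x = (c::real))"
proof
  assume "\<exists>c. AE x in M. - g x = c"
  then obtain c where "AE x in M. - g x = c" ..
  then have "AE x in M. g x = - c" by eventually_elim auto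
  then show "\<exists>c. AE x in M. g x = c" ..
next
  assume "\<exists>c. AE x in M. g x = c"
  then obtain c where "AE x in M. g x = c" ..
  then have "AE x in M. - g x = - c" by eventually_elim auto
  then show "\<exists>c. AE x in M. - g x = c" ..
qed

lemma Xi_minus_upper_bound:
  fixes P Q :: "'a measure" and g :: "'a \<Rightarrow> real"
  assumes P: "prob_space P" and Q: "prob_space Q" and sets_eq: "sets Q = sets P"
    and g: "g \<in> borel_measurable P" "\<forall>x \<in> space P. \<bar>g x\<bar> \<le> B" and \<gamma>: "\<gamma> \<noteq> 0"
  shows "Xi_minus \<gamma> Q P g \<le> ereal (cgf_term Q g \<gamma> - cgf_term P g \<gamma>)"
proof -
  have "ereal (- cgf_term Q g \<gamma> - - cgf_term P g \<gamma>) \<le> Xi_plus (- \<gamma>) Q P (\<lambda>x. - g x)"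
    using Xi_plus_lower_bound[OF P Q sets_eq, of "\<lambda>x. - g x" B "- \<gamma>"] g \<gamma>
    unfolding cgf_term_uminus by auto
  then show ?thesis
    unfolding Xi_minus_eq_uminus_Xi_plus[OF \<gamma>] by (subst ereal_uminus_le_reorder) simp
qed

lemma Xi_minus_nonpos:
  fixes P Q :: "'a measure" and g :: "'a \<Rightarrow> real"
  assumes P: "prob_space P" and Q: "prob_space Q" and sets_eq: "sets Q = sets P"
    and g: "g \<in> borel_measurable P" "\<forall>x \<in> space P. \<bar>g x\<bar> \<le> B" and \<gamma>: "\<gamma> \<noteq> 0"
  shows "0 \<le> - Xi_minus \<gamma> Q P g"
  unfolding Xi_minus_eq_uminus_Xi_plus[OF \<gamma>]
  using Xi_plus_nonneg[OF P Q sets_eq, of "\<lambda>x. - g x" B "- \<gamma>"] g \<gamma> by auto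

lemma Xi_minus_eq_0_iff:
  fixes P Q :: "'a measure" and g :: "'a \<Rightarrow> real"
  assumes P: "prob_space P" and Q: "prob_space Q" and sets_eq: "sets Q = sets P"
    and g: "g \<in> borel_measurable P" "\<forall>x \<in> space P. \<bar>g x\<bar> \<le> B" and \<gamma>: "\<gamma> \<noteq> 0"
    and nonconst: "\<not> (\<exists>c. AE x in P. g x = c)"
  shows "Xi_minus \<gamma> Q P g = 0 \<longleftrightarrow> Q = P"
  unfolding Xi_minus_eq_uminus_Xi_plus[OF \<gamma>]
  using Xi_plus_eq_0_iff[OF P Q sets_eq, of "\<lambda>x. - g x" B "- \<gamma>"] g \<gamma> nonconst
  by (simp add: ereal_uminus_eq_reorder ex_AE_eq_const_uminus)

theorem mainTheorem12:
  fixes P Q :: "'a measure" and g :: "'a \<Rightarrow> real" and \<gamma> :: real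
  assumes "prob_space P" and "prob_space Q" and "sets Q = sets P"
    and "g \<in> borel_measurable P" and "\<exists>B. \<forall>x \<in> space P. \<bar>g x\<bar> \<le> B"
    and "\<gamma> \<noteq> 0"
  shows "Xi_minus \<gamma> Q P g \<le> ereal (cgf_term Q g \<gamma> - cgf_term P g \<gamma>)
      \<and> ereal (cgf_term Q g \<gamma> - cgf_term P g \<gamma>) \<le> Xi_plus \<gamma> Q P g
      \<and> Xi_minus \<gamma> Q P g = - Xi_plus (- \<gamma>) Q P (\<lambda>x. - g x)
      \<and> Xi_plus \<gamma> Q P g \<ge> 0 \<and> - Xi_minus \<gamma> Q P g \<ge> 0
      \<and> ((\<not> (\<exists>c. AE x in P. g x = c)) \<longrightarrow>
           ((Xi_plus \<gamma> Q P g = 0 \<longleftrightarrow> Q = P) \<and> (Xi_minus \<gamma> Q P g = 0 \<longleftrightarrow> Q = P)))"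
proof -
  obtain B where "\<forall>x \<in> space P. \<bar>g x\<bar> \<le> B" using assms(5) by blast
  note hyps = assms(1-4) this assms(6)
  show ?thesis
    using Xi_minus_upper_bound[OF hyps] Xi_plus_lower_bound[OF hyps]
      Xi_minus_eq_uminus_Xi_plus[OF assms(6)] Xi_plus_nonneg[OF hyps] Xi_minus_nonpos[OF hyps]
      Xi_plus_eq_0_iff[OF hyps] Xi_minus_eq_0_iff[OF hyps]
    by blast
qed

end
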